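(* Let $\Gamma=(V,m,\tau)$ be a weak $W$-graph and let $A\subseteq\Delta$. Then the subspaces of $\mathbb{C}V$ spanned by $V(A,-)$ and by $V(A,-)\cup V(A,0)$ are stable under $W(A)$.
   Context: $W$ is a Weyl group with a fixed set $\Delta$ of simple roots; for a root $\alpha$, $s_\alpha$ is the reflection in the hyperplane orthogonal to $\alpha$. A weak $W$-graph is a triple $\Gamma=(V,m,\tau)$ where $V$ is a finite set, $m:V\times V\to\mathbb{C}$ is a map, and $\tau$ is a map from $V$ to the power set of $\Delta$, such that the linear maps $s_\alpha:\mathbb{C}V\to\mathbb{C}V$ ($\alpha\in\Delta$) given on basis vectors by $s_\alpha(v)=-v$ if $\alpha\in\tau(v)$ and $s_\alpha(v)=v-\sum_{u\in V,\ \alpha\in\tau(u)} m(u,v)u$ if $\alpha\notin\tau(v)$ define a representation of $W$ on $\mathbb{C}V$. For $A\subseteq\Delta$, $W(A)$ is the subgroup of $W$ generated by $\{s_\alpha:\alpha\in A\}$, and $V(A,-)=\{v\in V: A\subseteq\tau(v)\}$, $V(A,0)=\{v\in V: A\cap\tau(v)\neq\emptyset,\ A\not\subseteq\tau(v)\}$, $V(A,+)=\{v\in V: A\cap\tau(v)=\emptyset\}$. *)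

theory Defs
  imports "HOL-Analysis.Analysis"
begin

definition refl :: "'a::euclidean_space \<Rightarrow> 'a \<Rightarrow> 'a" where
  "refl \<alpha> x = x - ((2 * (x \<bullet> \<alpha>)) / (\<alpha> \<bullet> \<alpha>)) *\<^sub>R \<alpha>"

definition root_system :: "'a::euclidean_space set \<Rightarrow> bool" where
  "root_system \<Phi> \<longleftrightarrow> finite \<Phi> \<and> 0 \<notin> \<Phi> \<and> span \<Phi> = UNIV \<and>
     (\<forall>\<alpha>\<in>\<Phi>. \<forall>\<beta>\<in>\<Phi>. refl \<alpha> \<beta> \<in> \<Phi>) \<and>
     (\<forall>\<alpha>\<in>\<Phi>. \<forall>\<beta>\<in>\<Phi>. (2 * (\<beta> \<bullet> \<alpha>)) / (\<alpha> \<bullet> \<alpha>) \<in> \<int>) \<and>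
     (\<forall>\<alpha>\<in>\<Phi>. \<forall>c::real. c *\<^sub>R \<alpha> \<in> \<Phi> \<longrightarrow> c = 1 \<or> c = -1)"

definition simple_system :: "'a::euclidean_space set \<Rightarrow> 'a set \<Rightarrow> bool" where
  "simple_system \<Phi> \<Delta> \<longleftrightarrow> \<Delta> \<subseteq> \<Phi> \<and> independent \<Delta> \<and>
     (\<forall>\<beta>\<in>\<Phi>. \<exists>c::'a \<Rightarrow> int. \<beta> = (\<Sum>\<alpha>\<in>\<Delta>. of_int (c \<alpha>) *\<^sub>R \<alpha>) \<and>
        ((\<forall>\<alpha>\<in>\<Delta>. c \<alpha> \<ge> 0) \<or> (\<forall>\<alpha>\<in>\<Delta>. c \<alpha> \<le> 0)))"

text \<open>Group of linear maps generated by the reflections in a set of vectors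
  (reflections are involutions, so closure under composition with generators
  gives the generated group).\<close>
inductive_set refl_group :: "'a::euclidean_space set \<Rightarrow> ('a \<Rightarrow> 'a) set"
  for S :: "'a set" where
  id_in: "id \<in> refl_group S"
| step: "w \<in> refl_group S \<Longrightarrow> \<alpha> \<in> S \<Longrightarrow> refl \<alpha> \<circ> w \<in> refl_group S"

abbreviation weyl_group :: "'a::euclidean_space set \<Rightarrow> ('a \<Rightarrow> 'a) set" where
  "weyl_group \<Phi> \<equiv> refl_group \<Phi>"

abbreviation parabolic :: "'a::euclidean_space set \<Rightarrow> ('a \<Rightarrow> 'a) set" where
  "parabolic A \<equiv> refl_group A"

text \<open>CV is modelled as complex-valued functions on the vertex type supported in V.\<close>
definition CV :: "'v set \<Rightarrow> ('v \<Rightarrow> complex) set" where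
  "CV V = {f. \<forall>x. x \<notin> V \<longrightarrow> f x = 0}"

definition bvec :: "'v \<Rightarrow> 'v \<Rightarrow> complex" where
  "bvec v = (\<lambda>x. if x = v then 1 else 0)"

definition bspan :: "'v set \<Rightarrow> ('v \<Rightarrow> complex) set" where
  "bspan B = {f. \<exists>c. f = (\<lambda>x. \<Sum>u\<in>B. c u * bvec u x)}"

definition s_img :: "'v set \<Rightarrow> ('v \<Rightarrow> 'v \<Rightarrow> complex) \<Rightarrow> ('v \<Rightarrow> 'a set) \<Rightarrow> 'a \<Rightarrow> 'v \<Rightarrow> 'v \<Rightarrow> complex" where
  "s_img V m \<tau> \<alpha> v =
     (if \<alpha> \<in> \<tau> v then (\<lambda>x. - bvec v x)
      else (\<lambda>x. bvec v x - (\<Sum>u\<in>{u\<in>V. \<alpha> \<in> \<tau> u}. m u v * bvec u x)))"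

definition s_op :: "'v set \<Rightarrow> ('v \<Rightarrow> 'v \<Rightarrow> complex) \<Rightarrow> ('v \<Rightarrow> 'a set) \<Rightarrow> 'a \<Rightarrow> ('v \<Rightarrow> complex) \<Rightarrow> 'v \<Rightarrow> complex" where
  "s_op V m \<tau> \<alpha> f = (\<lambda>x. \<Sum>v\<in>V. f v * s_img V m \<tau> \<alpha> v x)"

definition W_rep :: "'a::euclidean_space set \<Rightarrow> 'a set \<Rightarrow> 'v set \<Rightarrow> ('v \<Rightarrow> 'v \<Rightarrow> complex) \<Rightarrow>
    ('v \<Rightarrow> 'a set) \<Rightarrow> (('a \<Rightarrow> 'a) \<Rightarrow> ('v \<Rightarrow> complex) \<Rightarrow> 'v \<Rightarrow> complex) \<Rightarrow> bool" where
  "W_rep \<Phi> \<Delta> V m \<tau> \<rho> \<longleftrightarrow>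
     (\<forall>w\<in>weyl_group \<Phi>. \<forall>f\<in>CV V. \<rho> w f \<in> CV V) \<and>
     (\<forall>w\<in>weyl_group \<Phi>. \<forall>f\<in>CV V. \<forall>g\<in>CV V. \<rho> w (\<lambda>x. f x + g x) = (\<lambda>x. \<rho> w f x + \<rho> w g x)) \<and>
     (\<forall>w\<in>weyl_group \<Phi>. \<forall>f\<in>CV V. \<forall>c. \<rho> w (\<lambda>x. c * f x) = (\<lambda>x. c * \<rho> w f x)) \<and>
     (\<forall>f\<in>CV V. \<rho> id f = f) \<and>
     (\<forall>w1\<in>weyl_group \<Phi>. \<forall>w2\<in>weyl_group \<Phi>. \<forall>f\<in>CV V. \<rho> (w1 \<circ> w2) f = \<rho> w1 (\<rho> w2 f)) \<and>
     (\<forall>\<alpha>\<in>\<Delta>. \<forall>f\<in>CV V. \<rho> (refl \<alpha>) f = s_op V m \<tau> \<alpha> f)"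

definition weak_W_graph :: "'a::euclidean_space set \<Rightarrow> 'a set \<Rightarrow> 'v set \<Rightarrow> ('v \<Rightarrow> 'v \<Rightarrow> complex) \<Rightarrow>
    ('v \<Rightarrow> 'a set) \<Rightarrow> bool" where
  "weak_W_graph \<Phi> \<Delta> V m \<tau> \<longleftrightarrow> finite V \<and> (\<forall>v\<in>V. \<tau> v \<subseteq> \<Delta>) \<and> (\<exists>\<rho>. W_rep \<Phi> \<Delta> V m \<tau> \<rho>)"

definition V_minus :: "'v set \<Rightarrow> ('v \<Rightarrow> 'a set) \<Rightarrow> 'a set \<Rightarrow> 'v set" where
  "V_minus V \<tau> A = {v\<in>V. A \<subseteq> \<tau> v}"

definition V_zero :: "'v set \<Rightarrow> ('v \<Rightarrow> 'a set) \<Rightarrow> 'a set \<Rightarrow> 'v set" where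
  "V_zero V \<tau> A = {v\<in>V. A \<inter> \<tau> v \<noteq> {} \<and> \<not> A \<subseteq> \<tau> v}"

definition V_plus :: "'v set \<Rightarrow> ('v \<Rightarrow> 'a set) \<Rightarrow> 'a set \<Rightarrow> 'v set" where
  "V_plus V \<tau> A = {v\<in>V. A \<inter> \<tau> v = {}}"

end

theory Submission
  imports Defs
begin

text \<open>A subset S of the vertices spans a W(A)-stable subspace as soon as, for each
  \<alpha> \<in> A, every vertex v \<in> S with \<alpha> \<notin> \<tau> v only sees vertices u with \<alpha> \<in> \<tau> u that
  again lie in S: then s_\<alpha> v is either -v or v minus a combination of such u.
  Both V(A,-) and V(A,-) \<union> V(A,0) have this property; for V(A,-) the condition
  is vacuous, and for the union any u with \<alpha> \<in> \<tau> u meets A.\<close>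

lemma bspan_eq_CV:
  assumes "finite B"
  shows "bspan B = CV B"
proof (intro set_eqI iffI)
  fix f assume "f \<in> bspan B"
  then obtain c where "f = (\<lambda>x. \<Sum>u\<in>B. c u * bvec u x)"
    unfolding bspan_def by blast
  then show "f \<in> CV B"
    by (auto simp: CV_def bvec_def intro!: sum.neutral)
next
  fix f assume f: "f \<in> CV B"
  have "f x = (\<Sum>u\<in>B. f u * bvec u x)" for x
    using f assms by (simp add: CV_def bvec_def sum.delta' if_distrib cong: if_cong)
  then show "f \<in> bspan B"
    unfolding bspan_def by blast
qed

lemma CV_mono: "S \<subseteq> T \<Longrightarrow> CV S \<subseteq> CV T"
  unfolding CV_def by blast

lemma refl_group_mono: "w \<in> refl_group A \<Longrightarrow> A \<subseteq> B \<Longrightarrow> w \<in> refl_group B"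
  by (induction rule: refl_group.induct) (auto intro: refl_group.intros)

lemma refl_in_refl_group: "\<alpha> \<in> S \<Longrightarrow> refl \<alpha> \<in> refl_group S"
  using refl_group.step[OF refl_group.id_in] by simp

lemma s_op_CV_closed:
  assumes closed: "\<forall>v\<in>S. \<alpha> \<notin> \<tau> v \<longrightarrow> {u\<in>V. \<alpha> \<in> \<tau> u} \<subseteq> S"
    and g: "g \<in> CV S"
  shows "s_op V m \<tau> \<alpha> g \<in> CV S"
  unfolding CV_def
proof (intro CollectI allI impI)
  fix x assume x: "x \<notin> S"
  have "g v * s_img V m \<tau> \<alpha> v x = 0" for v
  proof (cases "v \<in> S")
    case True
    then have "x \<noteq> v" using x by auto
    moreover have "\<alpha> \<notin> \<tau> v \<Longrightarrow> (\<Sum>u\<in>{u\<in>V. \<alpha> \<in> \<tau> u}. m u v * bvec u x) = 0"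
      using closed True x by (intro sum.neutral) (auto simp: bvec_def)
    ultimately show ?thesis
      by (simp add: s_img_def bvec_def)
  next
    case False
    then show ?thesis using g by (simp add: CV_def)
  qed
  then show "s_op V m \<tau> \<alpha> g x = 0"
    unfolding s_op_def by (intro sum.neutral) blast
qed

lemma W_rep_parabolic_CV_closed:
  assumes rep: "W_rep \<Phi> \<Delta> V m \<tau> \<rho>" and "A \<subseteq> \<Delta>" "\<Delta> \<subseteq> \<Phi>" and "S \<subseteq> V"
    and closed: "\<forall>\<alpha>\<in>A. \<forall>v\<in>S. \<alpha> \<notin> \<tau> v \<longrightarrow> {u\<in>V. \<alpha> \<in> \<tau> u} \<subseteq> S"
    and "w \<in> refl_group A" and "f \<in> CV S"
  shows "\<rho> w f \<in> CV S"
  using \<open>w \<in> refl_group A\<close> \<open>f \<in> CV S\<close>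
proof (induction arbitrary: f rule: refl_group.induct)
  case id_in
  then have "f \<in> CV V"
    using CV_mono[OF \<open>S \<subseteq> V\<close>] by blast
  then have "\<rho> id f = f"
    using rep unfolding W_rep_def by blast
  then show ?case
    using id_in by (simp add: id_def)
next
  case (step w \<alpha>)
  have wf: "\<rho> w f \<in> CV S"
    using step by blast
  have "\<alpha> \<in> \<Delta>" "\<alpha> \<in> \<Phi>"
    using step.hyps(2) assms(2,3) by auto
  moreover have "w \<in> weyl_group \<Phi>"
    using refl_group_mono[OF step.hyps(1)] assms(2,3) by auto
  moreover note refl_in_refl_group[OF \<open>\<alpha> \<in> \<Phi>\<close>]
  moreover have "f \<in> CV V" "\<rho> w f \<in> CV V"
    using step.prems wf CV_mono[OF \<open>S \<subseteq> V\<close>] by auto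
  ultimately have "\<rho> (refl \<alpha> \<circ> w) f = s_op V m \<tau> \<alpha> (\<rho> w f)"
    using rep unfolding W_rep_def by simp
  then show ?case
    using s_op_CV_closed[OF bspec[OF closed step.hyps(2)] wf] by (simp only:)
qed

theorem proposition2p5:
  fixes \<Phi> \<Delta> A :: "'a::euclidean_space set"
    and V :: "'v set" and m :: "'v \<Rightarrow> 'v \<Rightarrow> complex" and \<tau> :: "'v \<Rightarrow> 'a set"
  assumes "root_system \<Phi>" and "simple_system \<Phi> \<Delta>"
    and "weak_W_graph \<Phi> \<Delta> V m \<tau>"
    and "A \<subseteq> \<Delta>"
    and "W_rep \<Phi> \<Delta> V m \<tau> \<rho>"
  shows "(\<forall>w\<in>parabolic A. \<forall>f\<in>bspan (V_minus V \<tau> A). \<rho> w f \<in> bspan (V_minus V \<tau> A)) \<and>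
         (\<forall>w\<in>parabolic A. \<forall>f\<in>bspan (V_minus V \<tau> A \<union> V_zero V \<tau> A).
              \<rho> w f \<in> bspan (V_minus V \<tau> A \<union> V_zero V \<tau> A))"
proof -
  let ?Sm = "V_minus V \<tau> A" and ?Sz = "V_minus V \<tau> A \<union> V_zero V \<tau> A"
  have "finite V"
    using assms(3) by (simp add: weak_W_graph_def)
  have "\<Delta> \<subseteq> \<Phi>"
    using assms(2) by (simp add: simple_system_def)
  have "?Sm \<subseteq> V" "?Sz \<subseteq> V"
    by (auto simp: V_minus_def V_zero_def)
  moreover have "\<forall>\<alpha>\<in>A. \<forall>v\<in>?Sm. \<alpha> \<notin> \<tau> v \<longrightarrow> {u\<in>V. \<alpha> \<in> \<tau> u} \<subseteq> ?Sm"
    "\<forall>\<alpha>\<in>A. \<forall>v\<in>?Sz. \<alpha> \<notin> \<tau> v \<longrightarrow> {u\<in>V. \<alpha> \<in> \<tau> u} \<subseteq> ?Sz"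
    by (auto simp: V_minus_def V_zero_def)
  ultimately show ?thesis
    using W_rep_parabolic_CV_closed[OF assms(5,4) \<open>\<Delta> \<subseteq> \<Phi>\<close>]
      bspan_eq_CV[OF finite_subset[OF _ \<open>finite V\<close>]] by simp
qed

end
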